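(* Let $\mathbb{C}$ be a locally small category and $\mathbb{C}_{\mathit{fin}}$ a full subcategory satisfying (C1)–(C5) below. Let $\mathbb{A}$ be a full subcategory of $\mathbb{C}_{\mathit{fin}}$ and let $F\in\mathrm{Ob}(\mathbb{C})$ be universal and locally finite for $\mathbb{A}$. Then for all integers $t\ge2$ and all $A\in\mathrm{Ob}(\mathbb{A})$ the following are equivalent: (1) $t_{\mathbb{A}}(A)\le t$; (2) $F\to(B)^A_{<\omega,t}$ for all $B\in\mathrm{Ob}(\mathbb{A})$ with $A\to B$; (3) for all $B\in\mathrm{Ob}(\mathbb{A})$ with $A\to B$ there is a coloring $\lambda:\hom(A,B)\to\{0,\dots,t-1\}$ which is essential at $B$.
   Context: Write $A\to B$ if $\hom(A,B)\ne\varnothing$. Conditions: (C1) all morphisms of $\mathbb{C}$ are monomorphisms; (C2) $\mathrm{Ob}(\mathbb{C}_{\mathit{fin}})$ is a set; (C3) $\hom(A,B)$ is finite for $A,B\in\mathrm{Ob}(\mathbb{C}_{\mathit{fin}})$; (C4) for every $F\in\mathrm{Ob}(\mathbb{C})$ there is $A\in\mathrm{Ob}(\mathbb{C}_{\mathit{fin}})$ with $A\to F$; (C5) for every $B\in\mathrm{Ob}(\mathbb{C}_{\mathit{fin}})$ the set $\{A\in\mathrm{Ob}(\mathbb{C}_{\mathit{fin}}):A\to B\}$ is finite. $F$ is universal for $\mathbb{A}$ if $A\to F$ for all $A\in\mathrm{Ob}(\mathbb{A})$. $F$ is locally finite for $\mathbb{A}$ if for all $A,B\in\mathrm{Ob}(\mathbb{A})$,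 $e\in\hom(A,F)$, $f\in\hom(B,F)$ there exist $D\in\mathrm{Ob}(\mathbb{A})$, $r\in\hom(D,F)$, $p\in\hom(A,D)$, $q\in\hom(B,D)$ with $r\cdot p=e$, $r\cdot q=f$, such that for every $H\in\mathrm{Ob}(\mathbb{C})$, $r'\in\hom(H,F)$, $p'\in\hom(A,H)$, $q'\in\hom(B,H)$ with $r'\cdot p'=e$, $r'\cdot q'=f$ there is $s\in\hom(D,H)$ with $r'\cdot s=r$, $s\cdot p=p'$, $s\cdot q=q'$. For objects $A,B,C$ and integers $k\ge2$, $t\ge1$: $C\to(B)^A_{k,t}$ means that for every $\chi:\hom(A,C)\to\{0,\dots,k-1\}$ there is $w\in\hom(B,C)$ with $|\chi(w\cdot\hom(A,B))|\le t$; $C\to(B)^A_{<\omega,t}$ means $C\to(B)^A_{k,t}$ for all $k\ge2$. $t_{\mathbb{A}}(A)$ is the least positive $n$ such that for all $k\ge2$ and all $B\in\mathrm{Ob}(\mathbb{A})$ there is $C\in\mathrm{Ob}(\mathbb{A})$ with $C\to(B)^A_{k,n}$, and $\infty$ otherwise. For $\chi:\hom(A,F)\to\{0,\dots,k-1\}$ and $w\in\hom(B,F)$, $\chi^{(w)}:\hom(A,B)\to\{0,\dots,k-1\}$ is $\chi^{(w)}(f)=\chi(w\cdot f)$. The kernel of a function $g$ is $\ker g=\{(x,y):g(x)=g(y)\}$. A coloring $\lambda:\hom(A,B)\to\{0,\dots,t-1\}$ is essential at $B$ (with respect to $F$) if for every $k\ge2$ and every $\chi:\hom(A,F)\to\{0,\dots,k-1\}$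 there is $w\in\hom(B,F)$ with $\ker\lambda\subseteq\ker\chi^{(w)}$. *)

theory Defs
  imports Main "HOL-Library.Extended_Nat"
begin

record ('o, 'm) category =
  Ob    :: "'o set"
  Hom   :: "'o \<Rightarrow> 'o \<Rightarrow> 'm set"
  comp  :: "'m \<Rightarrow> 'm \<Rightarrow> 'm"   (* comp C g f = g \<cdot> f  (first f, then g) *)
  ident :: "'o \<Rightarrow> 'm"

definition is_category :: "('o, 'm) category \<Rightarrow> bool" where
  "is_category C \<longleftrightarrow>
     (\<forall>X Y. (X \<notin> Ob C \<or> Y \<notin> Ob C) \<longrightarrow> Hom C X Y = {}) \<and>
     (\<forall>X\<in>Ob C. \<forall>Y\<in>Ob C. \<forall>X'\<in>Ob C. \<forall>Y'\<in>Ob C.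
        (X, Y) \<noteq> (X', Y') \<longrightarrow> Hom C X Y \<inter> Hom C X' Y' = {}) \<and>
     (\<forall>X\<in>Ob C. ident C X \<in> Hom C X X) \<and>
     (\<forall>X Y Z f g. f \<in> Hom C X Y \<longrightarrow> g \<in> Hom C Y Z \<longrightarrow> comp C g f \<in> Hom C X Z) \<and>
     (\<forall>W X Y Z f g h. f \<in> Hom C W X \<longrightarrow> g \<in> Hom C X Y \<longrightarrow> h \<in> Hom C Y Z \<longrightarrow>
        comp C h (comp C g f) = comp C (comp C h g) f) \<and>
     (\<forall>X Y f. f \<in> Hom C X Y \<longrightarrow> comp C f (ident C X) = f \<and> comp C (ident C Y) f = f)"

definition arr :: "('o, 'm) category \<Rightarrow> 'o \<Rightarrow> 'o \<Rightarrow> bool" where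
  "arr C A B \<longleftrightarrow> Hom C A B \<noteq> {}"

definition is_mono :: "('o, 'm) category \<Rightarrow> 'o \<Rightarrow> 'o \<Rightarrow> 'm \<Rightarrow> bool" where
  "is_mono C Y Z f \<longleftrightarrow> f \<in> Hom C Y Z \<and>
     (\<forall>X\<in>Ob C. \<forall>g\<in>Hom C X Y. \<forall>h\<in>Hom C X Y. comp C f g = comp C f h \<longrightarrow> g = h)"

text \<open>Conditions (C1)--(C5) for a category C and the object set Cfin of a full
  subcategory C_fin.  (C2) ``Ob(C_fin) is a set'' holds automatically in HOL.\<close>
definition C_conditions :: "('o, 'm) category \<Rightarrow> 'o set \<Rightarrow> bool" where
  "C_conditions C Cfin \<longleftrightarrow>
     (\<forall>Y\<in>Ob C. \<forall>Z\<in>Ob C. \<forall>f\<in>Hom C Y Z. is_mono C Y Z f) \<and>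
     (\<forall>A\<in>Cfin. \<forall>B\<in>Cfin. finite (Hom C A B)) \<and>
     (\<forall>F\<in>Ob C. \<exists>A\<in>Cfin. arr C A F) \<and>
     (\<forall>B\<in>Cfin. finite {A\<in>Cfin. arr C A B})"

definition universal :: "('o, 'm) category \<Rightarrow> 'o set \<Rightarrow> 'o \<Rightarrow> bool" where
  "universal C AA F \<longleftrightarrow> (\<forall>A\<in>AA. arr C A F)"

definition locally_finite :: "('o, 'm) category \<Rightarrow> 'o set \<Rightarrow> 'o \<Rightarrow> bool" where
  "locally_finite C AA F \<longleftrightarrow>
     (\<forall>A\<in>AA. \<forall>B\<in>AA. \<forall>e\<in>Hom C A F. \<forall>f\<in>Hom C B F.
       \<exists>D\<in>AA. \<exists>r\<in>Hom C D F. \<exists>p\<in>Hom C A D. \<exists>q\<in>Hom C B D.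
         comp C r p = e \<and> comp C r q = f \<and>
         (\<forall>H\<in>Ob C. \<forall>r'\<in>Hom C H F. \<forall>p'\<in>Hom C A H. \<forall>q'\<in>Hom C B H.
            comp C r' p' = e \<longrightarrow> comp C r' q' = f \<longrightarrow>
            (\<exists>s\<in>Hom C D H. comp C r' s = r \<and> comp C s p = p' \<and> comp C s q = q')))"

text \<open>Colorings \<chi> : hom(A,C) \<rightarrow> {0,...,k-1} are functions 'm \<Rightarrow> nat whose values on
  hom(A,C) lie below k (values outside hom(A,C) are irrelevant).\<close>
definition coloring :: "('o, 'm) category \<Rightarrow> 'o \<Rightarrow> 'o \<Rightarrow> nat \<Rightarrow> ('m \<Rightarrow> nat) \<Rightarrow> bool" where
  "coloring C A X k \<chi> \<longleftrightarrow> \<chi> ` Hom C A X \<subseteq> {..<k}"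

definition ramsey_arrow ::
  "('o, 'm) category \<Rightarrow> 'o \<Rightarrow> 'o \<Rightarrow> 'o \<Rightarrow> nat \<Rightarrow> nat \<Rightarrow> bool" where
  "ramsey_arrow C X B A k t \<longleftrightarrow>
     (\<forall>\<chi>. coloring C A X k \<chi> \<longrightarrow>
        (\<exists>w\<in>Hom C B X. card (\<chi> ` ((\<lambda>f. comp C w f) ` Hom C A B)) \<le> t))"

definition ramsey_arrow_fin ::
  "('o, 'm) category \<Rightarrow> 'o \<Rightarrow> 'o \<Rightarrow> 'o \<Rightarrow> nat \<Rightarrow> bool" where
  "ramsey_arrow_fin C X B A t \<longleftrightarrow> (\<forall>k\<ge>2. ramsey_arrow C X B A k t)"

definition small_ramsey_degree :: "('o, 'm) category \<Rightarrow> 'o set \<Rightarrow> 'o \<Rightarrow> enat" where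
  "small_ramsey_degree C AA A =
     (let P = (\<lambda>n::nat. 0 < n \<and> (\<forall>k\<ge>2. \<forall>B\<in>AA. \<exists>X\<in>AA. ramsey_arrow C X B A k n))
      in if \<exists>n. P n then enat (LEAST n. P n) else \<infinity>)"

definition kernel_on :: "'a set \<Rightarrow> ('a \<Rightarrow> 'b) \<Rightarrow> ('a \<times> 'a) set" where
  "kernel_on S g = {(x, y). x \<in> S \<and> y \<in> S \<and> g x = g y}"

definition essential ::
  "('o, 'm) category \<Rightarrow> 'o \<Rightarrow> 'o \<Rightarrow> 'o \<Rightarrow> ('m \<Rightarrow> nat) \<Rightarrow> bool" where
  "essential C F A B lam \<longleftrightarrow>
     (\<forall>k\<ge>2. \<forall>\<chi>. coloring C A F k \<chi> \<longrightarrow>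
        (\<exists>w\<in>Hom C B F. kernel_on (Hom C A B) lam
                          \<subseteq> kernel_on (Hom C A B) (\<lambda>f. \<chi> (comp C w f))))"

end

theory Submission
  imports Defs "HOL-Analysis.Analysis"
begin

text \<open>
  (1) \<open>\<Longrightarrow>\<close> (2): a witness \<open>X \<longrightarrow> (B)\<^sup>A\<^sub>k\<^sub>,\<^sub>t\<close> in \<open>\<AA>\<close> maps into \<open>F\<close> by universality,
  and Ramsey arrows are inherited along morphisms.
  (2) \<open>\<Longrightarrow>\<close> (1) is a compactness argument: if no object of \<open>\<AA>\<close> arrows \<open>B\<close>, then for
  every \<open>r : D \<rightarrow> F\<close> with \<open>D \<in> \<AA>\<close> the colorings of \<open>hom(A,F)\<close> that are bad along \<open>r\<close>
  form a nonempty closed set in the compact space \<open>{0..k-1}\<^sup>h\<^sup>o\<^sup>m\<^sup>(\<^sup>A\<^sup>,\<^sup>F\<^sup>)\<close>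
  (nonempty because \<open>r\<close> is mono); local finiteness makes the family directed, so some
  coloring of \<open>hom(A,F)\<close> is bad along every \<open>r\<close>, in particular along every \<open>w : B \<rightarrow> F\<close>.
  (3) \<open>\<Longrightarrow>\<close> (2): a coloring whose kernel is refined by that of \<open>\<chi>\<^sup>(\<^sup>w\<^sup>)\<close> bounds its
  number of colors.
  (2) \<open>\<Longrightarrow>\<close> (3): there are only finitely many relations on the finite set \<open>hom(A,B)\<close>,
  so a single coloring \<open>\<chi>\<close> refines a refuting coloring for every kernel that is not
  essential; a copy \<open>w\<close> given by (2) for \<open>\<chi>\<close> then has an essential kernel \<open>ker \<chi>\<^sup>(\<^sup>w\<^sup>)\<close>.
\<close>

lemma category_comp_closed:
  "is_category C \<Longrightarrow> f \<in> Hom C X Y \<Longrightarrow> g \<in> Hom C Y Z \<Longrightarrow> comp C g f \<in> Hom C X Z"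
  unfolding is_category_def by blast

lemma category_comp_assoc:
  "is_category C \<Longrightarrow> f \<in> Hom C W X \<Longrightarrow> g \<in> Hom C X Y \<Longrightarrow> h \<in> Hom C Y Z \<Longrightarrow>
   comp C h (comp C g f) = comp C (comp C h g) f"
  unfolding is_category_def by blast

lemma category_ident_closed: "is_category C \<Longrightarrow> X \<in> Ob C \<Longrightarrow> ident C X \<in> Hom C X X"
  unfolding is_category_def by blast

lemma category_comp_ident_left: "is_category C \<Longrightarrow> f \<in> Hom C X Y \<Longrightarrow> comp C (ident C Y) f = f"
  unfolding is_category_def by blast

lemma category_Hom_Ob: "is_category C \<Longrightarrow> f \<in> Hom C X Y \<Longrightarrow> Y \<in> Ob C"
  unfolding is_category_def by (metis empty_iff)

subsection \<open>Ramsey arrows\<close>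

lemma ramsey_arrow_le:
  "ramsey_arrow C X B A k n \<Longrightarrow> n \<le> t \<Longrightarrow> ramsey_arrow C X B A k t"
  unfolding ramsey_arrow_def by (meson order_trans)

lemma ramsey_arrow_arr_trans:
  assumes cat: "is_category C" and arrow: "ramsey_arrow C X B A k n" and "arr C X Y"
  shows "ramsey_arrow C Y B A k n"
  unfolding ramsey_arrow_def
proof (intro allI impI)
  obtain u where u: "u \<in> Hom C X Y" using \<open>arr C X Y\<close> unfolding arr_def by blast
  fix chi assume "coloring C A Y k chi"
  then have "coloring C A X k (\<lambda>f. chi (comp C u f))"
    using category_comp_closed[OF cat _ u] unfolding coloring_def by blast
  then obtain w where w: "w \<in> Hom C B X"
    and few: "card ((\<lambda>f. chi (comp C u f)) ` (\<lambda>f. comp C w f) ` Hom C A B) \<le> n"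
    using arrow unfolding ramsey_arrow_def by blast
  have "chi ` (\<lambda>f. comp C (comp C u w) f) ` Hom C A B
        = (\<lambda>f. chi (comp C u f)) ` (\<lambda>f. comp C w f) ` Hom C A B"
    unfolding image_image using category_comp_assoc[OF cat _ w u] by simp
  then show "\<exists>w\<in>Hom C B Y. card (chi ` (\<lambda>f. comp C w f) ` Hom C A B) \<le> n"
    using few category_comp_closed[OF cat w u] by metis
qed

lemma ramsey_arrow_if_not_arr:
  assumes "is_category C" and "B \<in> Ob C" and "\<not> arr C A B"
  shows "ramsey_arrow C B B A k t"
  using category_ident_closed[OF assms(1,2)] assms(3) unfolding ramsey_arrow_def arr_def by auto

lemma small_ramsey_degree_le_enat_iff:
  assumes "0 < t"
  shows "small_ramsey_degree C AA A \<le> enat t \<longleftrightarrow>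
           (\<forall>k\<ge>2. \<forall>B\<in>AA. \<exists>X\<in>AA. ramsey_arrow C X B A k t)"
proof -
  define P where "P n \<longleftrightarrow> 0 < n \<and> (\<forall>k\<ge>2. \<forall>B\<in>AA. \<exists>X\<in>AA. ramsey_arrow C X B A k n)" for n
  have P_upward: "P m" if "P n" "n \<le> m" for n m
    using that ramsey_arrow_le unfolding P_def by (meson less_le_trans)
  have "small_ramsey_degree C AA A = (if \<exists>n. P n then enat (LEAST n. P n) else \<infinity>)"
    unfolding small_ramsey_degree_def P_def Let_def by simp
  then have "small_ramsey_degree C AA A \<le> enat t \<longleftrightarrow> (\<exists>n\<le>t. P n)"
    by (auto intro: LeastI Least_le order_trans)
  also have "\<dots> \<longleftrightarrow> P t"
    using P_upward by blast
  finally show ?thesis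
    using assms unfolding P_def by simp
qed

subsection \<open>Kernels of colorings\<close>

lemma card_image_le_if_kernel_on_subset:
  assumes "finite S" and "kernel_on S l \<subseteq> kernel_on S g"
  shows "card (g ` S) \<le> card (l ` S)"
proof -
  have "g x = g (inv_into S l (l x))" if "x \<in> S" for x
  proof -
    have "inv_into S l (l x) \<in> S" and "l (inv_into S l (l x)) = l x"
      using that by (auto intro: inv_into_into f_inv_into_f)
    then show ?thesis
      using assms(2) that unfolding kernel_on_def by auto
  qed
  then have "g ` S \<subseteq> (\<lambda>y. g (inv_into S l y)) ` l ` S"
    by auto
  then show ?thesis
    using assms(1) by (intro surj_card_le) auto
qed

lemma kernel_on_eq_lessThan_card:
  assumes "finite (g ` S)"
  obtains lam :: "'a \<Rightarrow> nat"
  where "lam ` S \<subseteq> {..<card (g ` S)}" and "kernel_on S lam = kernel_on S g"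
proof -
  obtain h where h: "bij_betw h (g ` S) {0..<card (g ` S)}"
    using ex_bij_betw_finite_nat[OF assms] by blast
  then have "inj_on h (g ` S)" and range: "h ` g ` S = {..<card (g ` S)}"
    unfolding bij_betw_def by (auto simp: atLeast0LessThan)
  then have "h (g x) = h (g y) \<longleftrightarrow> g x = g y" if "x \<in> S" "y \<in> S" for x y
    using that by (simp add: inj_on_eq_iff)
  then have "kernel_on S (\<lambda>x. h (g x)) = kernel_on S g"
    unfolding kernel_on_def by blast
  moreover have "(\<lambda>x. h (g x)) ` S \<subseteq> {..<card (g ` S)}"
    using range by (simp add: image_image)
  ultimately show ?thesis
    using that by blast
qed

lemma kernel_on_common_refinement:
  fixes g :: "'i \<Rightarrow> 'a \<Rightarrow> nat"
  assumes "finite I" and "\<And>i. i \<in> I \<Longrightarrow> g i ` S \<subseteq> {..<k i}"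
  obtains chi :: "'a \<Rightarrow> nat" and n
  where "chi ` S \<subseteq> {..<n}" and "\<forall>i\<in>I. kernel_on S chi \<subseteq> kernel_on S (g i)"
proof -
  define \<Phi> where "\<Phi> x = (\<lambda>i\<in>I. g i x)" for x
  have "g i x < k i" if "i \<in> I" "x \<in> S" for i x
    using assms(2)[OF that(1)] that(2) by blast
  then have "\<Phi> ` S \<subseteq> (\<Pi>\<^sub>E i\<in>I. {..<k i})"
    unfolding \<Phi>_def by auto
  moreover have "finite (\<Pi>\<^sub>E i\<in>I. {..<k i})"
    by (intro finite_PiE assms(1)) simp
  ultimately have "finite (\<Phi> ` S)"
    by (rule finite_subset)
  then obtain chi where "chi ` S \<subseteq> {..<card (\<Phi> ` S)}" and ker: "kernel_on S chi = kernel_on S \<Phi>"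
    by (rule kernel_on_eq_lessThan_card)
  have "g i x = g i y" if "\<Phi> x = \<Phi> y" "i \<in> I" for x y i
    using fun_cong[OF that(1), of i] that(2) unfolding \<Phi>_def by simp
  then have "kernel_on S \<Phi> \<subseteq> kernel_on S (g i)" if "i \<in> I" for i
    using that unfolding kernel_on_def by blast
  then have "\<forall>i\<in>I. kernel_on S chi \<subseteq> kernel_on S (g i)"
    unfolding ker by blast
  with \<open>chi ` S \<subseteq> _\<close> show ?thesis
    by (rule that)
qed

lemma kernel_on_comp_subset:
  assumes "h ` S \<subseteq> S'" and "kernel_on S' g \<subseteq> kernel_on S' g'"
  shows "kernel_on S (\<lambda>x. g (h x)) \<subseteq> kernel_on S (\<lambda>x. g' (h x))"
  using assms unfolding kernel_on_def by blast

subsection \<open>Essential colorings\<close>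

lemma essential_imp_ramsey_arrow:
  assumes "essential C F A B lam" and "coloring C A B t lam"
    and "finite (Hom C A B)" and "k \<ge> 2"
  shows "ramsey_arrow C F B A k t"
  unfolding ramsey_arrow_def
proof (intro allI impI)
  fix chi assume "coloring C A F k chi"
  then obtain w where w: "w \<in> Hom C B F"
    and ker: "kernel_on (Hom C A B) lam \<subseteq> kernel_on (Hom C A B) (\<lambda>f. chi (comp C w f))"
    using assms(1,4) unfolding essential_def by blast
  have "card (chi ` (\<lambda>f. comp C w f) ` Hom C A B) = card ((\<lambda>f. chi (comp C w f)) ` Hom C A B)"
    by (simp add: image_image)
  also have "\<dots> \<le> card (lam ` Hom C A B)"
    by (rule card_image_le_if_kernel_on_subset[OF assms(3) ker])
  also have "\<dots> \<le> t"
    using assms(2) card_mono[of "{..<t}"] unfolding coloring_def by fastforce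
  finally show "\<exists>w\<in>Hom C B F. card (chi ` (\<lambda>f. comp C w f) ` Hom C A B) \<le> t"
    using w by blast
qed

definition refutes ::
  "('o, 'm) category \<Rightarrow> 'o \<Rightarrow> 'o \<Rightarrow> 'o \<Rightarrow> ('m \<times> 'm) set \<Rightarrow> ('m \<Rightarrow> nat) \<Rightarrow> bool" where
  "refutes C F A B K chi \<longleftrightarrow>
     (\<forall>w\<in>Hom C B F. \<not> K \<subseteq> kernel_on (Hom C A B) (\<lambda>f. chi (comp C w f)))"

lemma essential_iff_not_refutes:
  "essential C F A B lam \<longleftrightarrow>
     (\<forall>k\<ge>2. \<forall>chi. coloring C A F k chi \<longrightarrow> \<not> refutes C F A B (kernel_on (Hom C A B) lam) chi)"
  unfolding essential_def refutes_def by blast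

lemma refutes_if_kernel_on_subset:
  assumes cat: "is_category C"
    and "kernel_on (Hom C A F) chi \<subseteq> kernel_on (Hom C A F) chi'"
    and "refutes C F A B K chi'"
  shows "refutes C F A B K chi"
  unfolding refutes_def
proof (intro ballI notI)
  fix w assume w: "w \<in> Hom C B F" and "K \<subseteq> kernel_on (Hom C A B) (\<lambda>f. chi (comp C w f))"
  have "(\<lambda>f. comp C w f) ` Hom C A B \<subseteq> Hom C A F"
    using category_comp_closed[OF cat _ w] by blast
  then have "kernel_on (Hom C A B) (\<lambda>f. chi (comp C w f))
               \<subseteq> kernel_on (Hom C A B) (\<lambda>f. chi' (comp C w f))"
    using assms(2) by (rule kernel_on_comp_subset)
  with \<open>K \<subseteq> _\<close> w assms(3) show False
    unfolding refutes_def by blast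
qed

lemma universal_refuting_coloring:
  assumes cat: "is_category C" and fin: "finite (Hom C A B)"
  shows "\<exists>n chi. coloring C A F n chi \<and>
           (\<forall>K k chi'. K \<subseteq> Hom C A B \<times> Hom C A B \<longrightarrow> coloring C A F k chi' \<longrightarrow>
              refutes C F A B K chi' \<longrightarrow> refutes C F A B K chi)"
proof -
  let ?S = "Hom C A B"
  define Refuted where
    "Refuted = {K. K \<subseteq> ?S \<times> ?S \<and> (\<exists>k chi'. coloring C A F k chi' \<and> refutes C F A B K chi')}"
  have "finite Refuted"
    using fin unfolding Refuted_def by (auto intro: finite_subset[of _ "Pow (?S \<times> ?S)"])
  have "\<forall>K\<in>Refuted. \<exists>p. coloring C A F (fst p) (snd p) \<and> refutes C F A B K (snd p)"
    unfolding Refuted_def by (simp add: split_paired_Ex)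
  from bchoice[OF this] obtain p
    where refuting: "\<forall>K\<in>Refuted. coloring C A F (fst (p K)) (snd (p K)) \<and> refutes C F A B K (snd (p K))"
    by blast
  have "snd (p K) ` Hom C A F \<subseteq> {..<fst (p K)}" if "K \<in> Refuted" for K
    using bspec[OF refuting that] unfolding coloring_def by blast
  then obtain chi and n :: nat where "chi ` Hom C A F \<subseteq> {..<n}"
    and refines: "\<forall>K\<in>Refuted. kernel_on (Hom C A F) chi \<subseteq> kernel_on (Hom C A F) (snd (p K))"
    by (rule kernel_on_common_refinement[OF \<open>finite Refuted\<close>])
  have refutes_all: "refutes C F A B K chi"
    if "K \<subseteq> ?S \<times> ?S" "coloring C A F k chi'" "refutes C F A B K chi'" for K k chi'
  proof -
    have "K \<in> Refuted"
      using that unfolding Refuted_def by blast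
    then show ?thesis
      using refutes_if_kernel_on_subset[OF cat bspec[OF refines] conjunct2[OF bspec[OF refuting]]]
      by blast
  qed
  have "coloring C A F n chi"
    using \<open>chi ` Hom C A F \<subseteq> {..<n}\<close> unfolding coloring_def .
  with refutes_all show ?thesis
    by blast
qed

lemma ramsey_arrow_imp_essential_coloring:
  fixes C :: "('o, 'm) category"
  assumes cat: "is_category C" and fin: "finite (Hom C A B)"
    and arrow: "\<forall>k\<ge>2. ramsey_arrow C F B A k t"
  shows "\<exists>lam. coloring C A B t lam \<and> essential C F A B lam"
proof -
  let ?S = "Hom C A B"
  obtain n chi where col: "coloring C A F n chi"
    and universal: "\<forall>K k chi'. K \<subseteq> ?S \<times> ?S \<longrightarrow> coloring C A F k chi' \<longrightarrow>
           refutes C F A B K chi' \<longrightarrow> refutes C F A B K chi"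
    using universal_refuting_coloring[OF cat fin] by blast
  have "coloring C A F (max 2 n) chi"
    using col unfolding coloring_def by auto
  moreover have "ramsey_arrow C F B A (max 2 n) t"
    using arrow by simp
  ultimately obtain w where w: "w \<in> Hom C B F"
    and "card (chi ` (\<lambda>f. comp C w f) ` ?S) \<le> t"
    unfolding ramsey_arrow_def by blast
  then have few: "card ((\<lambda>f. chi (comp C w f)) ` ?S) \<le> t"
    by (simp add: image_image)
  have "finite ((\<lambda>f. chi (comp C w f)) ` ?S)"
    using fin by simp
  then obtain lam :: "'m \<Rightarrow> nat"
    where lam: "lam ` ?S \<subseteq> {..<card ((\<lambda>f. chi (comp C w f)) ` ?S)}"
      and ker: "kernel_on ?S lam = kernel_on ?S (\<lambda>f. chi (comp C w f))"
    by (rule kernel_on_eq_lessThan_card)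
  have "coloring C A B t lam"
    using lam few unfolding coloring_def by (meson lessThan_subset_iff order_trans)
  have "\<not> refutes C F A B (kernel_on ?S lam) chi"
    using w unfolding ker refutes_def by blast
  moreover have "kernel_on ?S lam \<subseteq> ?S \<times> ?S"
    unfolding kernel_on_def by blast
  ultimately have "\<not> refutes C F A B (kernel_on ?S lam) chi'" if "coloring C A F k chi'" for k chi'
    using universal[rule_format, OF _ that] by blast
  then have "essential C F A B lam"
    unfolding essential_iff_not_refutes by blast
  with \<open>coloring C A B t lam\<close> show ?thesis
    by blast
qed

lemma ramsey_arrow_fin_iff_essential_coloring:
  assumes "is_category C" and "finite (Hom C A B)"
  shows "ramsey_arrow_fin C F B A t \<longleftrightarrow> (\<exists>lam. coloring C A B t lam \<and> essential C F A B lam)"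
  using ramsey_arrow_imp_essential_coloring[OF assms] essential_imp_ramsey_arrow[OF _ _ assms(2)]
  unfolding ramsey_arrow_fin_def by blast


subsection \<open>Compactness\<close>

lemma product_topology_discrete_topology_finite:
  assumes "finite I"
  shows "product_topology (\<lambda>i. discrete_topology (K i)) I = discrete_topology (\<Pi>\<^sub>E i\<in>I. K i)"
proof (subst eq_commute, unfold discrete_topology_unique, intro conjI ballI)
  fix x assume x: "x \<in> (\<Pi>\<^sub>E i\<in>I. K i)"
  then have "(\<Pi>\<^sub>E i\<in>I. {x i}) = {x}"
    by (intro PiE_singleton) (simp add: PiE_iff)
  moreover have "openin (product_topology (\<lambda>i. discrete_topology (K i)) I) (\<Pi>\<^sub>E i\<in>I. {x i})"
    unfolding openin_PiE[OF assms] using x by (simp add: PiE_iff)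
  ultimately show "openin (product_topology (\<lambda>i. discrete_topology (K i)) I) {x}"
    by simp
qed simp

lemma closedin_product_discrete_topology_restrict:
  assumes "finite J" and "J \<subseteq> I"
  shows "closedin (product_topology (\<lambda>i. discrete_topology (K i)) I)
           {x \<in> topspace (product_topology (\<lambda>i. discrete_topology (K i)) I). P (restrict x J)}"
proof -
  have "continuous_map (product_topology (\<lambda>i. discrete_topology (K i)) I)
          (discrete_topology (\<Pi>\<^sub>E i\<in>J. K i)) (\<lambda>x. restrict x J)"
    using continuous_on_restrict[OF assms(2)] product_topology_discrete_topology_finite[OF assms(1)]
    by metis
  then have "closedin (product_topology (\<lambda>i. discrete_topology (K i)) I)
      {x \<in> topspace (product_topology (\<lambda>i. discrete_topology (K i)) I).
         restrict x J \<in> {y \<in> \<Pi>\<^sub>E i\<in>J. K i. P y}}"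
    by (rule closedin_continuous_map_preimage) simp
  moreover have "restrict x J \<in> (\<Pi>\<^sub>E i\<in>J. K i)"
    if "x \<in> topspace (product_topology (\<lambda>i. discrete_topology (K i)) I)" for x
    using that assms(2) by auto
  ultimately show ?thesis
    by (smt (verit, best) Collect_cong mem_Collect_eq)
qed

lemma compact_space_Inter_directed_nonempty:
  assumes "compact_space X" and "I \<noteq> {}"
    and closed: "\<And>i. i \<in> I \<Longrightarrow> closedin X (S i)"
    and nonempty: "\<And>i. i \<in> I \<Longrightarrow> S i \<noteq> {}"
    and directed: "\<And>i j. i \<in> I \<Longrightarrow> j \<in> I \<Longrightarrow> \<exists>l\<in>I. S l \<subseteq> S i \<inter> S j"
  shows "(\<Inter>i\<in>I. S i) \<noteq> {}"
proof -
  have lower_bound: "\<exists>l\<in>I. S l \<subseteq> \<Inter>(S ` J)" if "finite J" "J \<subseteq> I" for J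
    using that
  proof (induction J rule: finite_induct)
    case empty
    then show ?case
      using \<open>I \<noteq> {}\<close> by blast
  next
    case (insert j J)
    then obtain l where "l \<in> I" and l: "S l \<subseteq> \<Inter>(S ` J)"
      by blast
    moreover obtain l' where "l' \<in> I" and "S l' \<subseteq> S j \<inter> S l"
      using directed[of j l] insert.prems \<open>l \<in> I\<close> by blast
    ultimately show ?case
      by blast
  qed
  have "\<Inter>\<F> \<noteq> {}" if \<F>: "finite \<F>" "\<F> \<subseteq> S ` I" for \<F>
  proof -
    obtain J where "J \<subseteq> I" and "finite J" and "\<F> = S ` J"
      using finite_subset_image[OF \<F>] by blast
    then obtain l where "l \<in> I" and "S l \<subseteq> \<Inter>\<F>"
      using lower_bound by blast
    then show ?thesis
      using nonempty[of l] by blast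
  qed
  moreover have "\<forall>U\<in>S ` I. closedin X U"
    using closed by blast
  ultimately show ?thesis
    using assms(1)[unfolded compact_space_fip, rule_format, of "S ` I"] by blast
qed

definition bad_colorings ::
  "('o, 'm) category \<Rightarrow> 'o \<Rightarrow> 'o \<Rightarrow> 'o \<Rightarrow> nat \<Rightarrow> nat \<Rightarrow> 'o \<Rightarrow> 'm \<Rightarrow> ('m \<Rightarrow> nat) set" where
  "bad_colorings C F A B k t D r =
     {chi \<in> Hom C A F \<rightarrow>\<^sub>E {..<k}.
        \<forall>w\<in>Hom C B D. t < card (chi ` (\<lambda>f. comp C r (comp C w f)) ` Hom C A B)}"

lemma closedin_bad_colorings:
  fixes C :: "('o, 'm) category"
  assumes cat: "is_category C" and "finite (Hom C A D)" and r: "r \<in> Hom C D F"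
  shows "closedin (product_topology (\<lambda>_. discrete_topology {..<k}) (Hom C A F))
           (bad_colorings C F A B k t D r)"
proof -
  let ?J = "(\<lambda>h. comp C r h) ` Hom C A D"
  let ?T = "product_topology (\<lambda>_. discrete_topology {..<k}) (Hom C A F)"
  define P where "P chi \<longleftrightarrow>
    (\<forall>w\<in>Hom C B D. t < card (chi ` (\<lambda>f. comp C r (comp C w f)) ` Hom C A B))"
    for chi :: "'m \<Rightarrow> nat"
  have J: "finite ?J" "?J \<subseteq> Hom C A F"
    using assms(2) category_comp_closed[OF cat _ r] by auto
  have "P (restrict chi ?J) \<longleftrightarrow> P chi" for chi
  proof -
    have "restrict chi ?J ` (\<lambda>f. comp C r (comp C w f)) ` Hom C A B
          = chi ` (\<lambda>f. comp C r (comp C w f)) ` Hom C A B" if "w \<in> Hom C B D" for w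
      using category_comp_closed[OF cat _ that] by (intro image_cong) auto
    then show ?thesis
      unfolding P_def by simp
  qed
  then have "bad_colorings C F A B k t D r = {chi \<in> topspace ?T. P (restrict chi ?J)}"
    unfolding bad_colorings_def P_def[symmetric] by simp
  moreover have "closedin ?T {chi \<in> topspace ?T. P (restrict chi ?J)}"
    by (rule closedin_product_discrete_topology_restrict[OF J])
  ultimately show ?thesis
    by simp
qed

lemma bad_colorings_antimono:
  assumes cat: "is_category C" and r: "r \<in> Hom C D F" and p: "p \<in> Hom C D' D"
  shows "bad_colorings C F A B k t D r \<subseteq> bad_colorings C F A B k t D' (comp C r p)"
proof -
  have "(\<lambda>f. comp C (comp C r p) (comp C w f)) ` Hom C A B
        = (\<lambda>f. comp C r (comp C (comp C p w) f)) ` Hom C A B" if w: "w \<in> Hom C B D'" for w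
  proof (rule image_cong[OF refl])
    fix f assume f: "f \<in> Hom C A B"
    show "comp C (comp C r p) (comp C w f) = comp C r (comp C (comp C p w) f)"
      using category_comp_assoc[OF cat category_comp_closed[OF cat f w] p r]
        category_comp_assoc[OF cat f w p] by simp
  qed
  then show ?thesis
    using category_comp_closed[OF cat _ p] unfolding bad_colorings_def by fastforce
qed

lemma bad_colorings_nonempty:
  assumes cat: "is_category C" and "0 < k" and A: "A \<in> Ob C"
    and r: "is_mono C D F r" and not_arrow: "\<not> ramsey_arrow C D B A k t"
  shows "bad_colorings C F A B k t D r \<noteq> {}"
proof -
  obtain chi0 where chi0: "coloring C A D k chi0"
    and many: "\<forall>w\<in>Hom C B D. t < card (chi0 ` (\<lambda>f. comp C w f) ` Hom C A B)"
    using not_arrow unfolding ramsey_arrow_def by (auto simp: not_le)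
  have r_Hom: "r \<in> Hom C D F" and inj: "inj_on (\<lambda>h. comp C r h) (Hom C A D)"
    using r A unfolding is_mono_def inj_on_def by blast+
  define chi where "chi = (\<lambda>g\<in>Hom C A F.
    if g \<in> (\<lambda>h. comp C r h) ` Hom C A D
    then chi0 (the_inv_into (Hom C A D) (\<lambda>h. comp C r h) g) else 0)"
  have pullback: "chi (comp C r h) = chi0 h" if "h \<in> Hom C A D" for h
    using that category_comp_closed[OF cat that r_Hom] the_inv_into_f_f[OF inj that]
    unfolding chi_def by auto
  have "chi \<in> Hom C A F \<rightarrow>\<^sub>E {..<k}"
    using chi0 \<open>0 < k\<close> the_inv_into_into[OF inj] unfolding chi_def coloring_def
    by (auto simp: PiE_iff image_subset_iff)
  moreover have "chi ` (\<lambda>f. comp C r (comp C w f)) ` Hom C A B = chi0 ` (\<lambda>f. comp C w f) ` Hom C A B"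
    if "w \<in> Hom C B D" for w
    unfolding image_image using pullback category_comp_closed[OF cat _ that] by simp
  ultimately have "chi \<in> bad_colorings C F A B k t D r"
    using many unfolding bad_colorings_def by simp
  then show ?thesis
    by blast
qed

lemma bad_colorings_directed:
  assumes cat: "is_category C" and lf: "locally_finite C AA F"
    and "D1 \<in> AA" "r1 \<in> Hom C D1 F" "D2 \<in> AA" "r2 \<in> Hom C D2 F"
  shows "\<exists>D\<in>AA. \<exists>r\<in>Hom C D F. bad_colorings C F A B k t D r
           \<subseteq> bad_colorings C F A B k t D1 r1 \<inter> bad_colorings C F A B k t D2 r2"
proof -
  obtain D r p q where "D \<in> AA" and r: "r \<in> Hom C D F"
    and p: "p \<in> Hom C D1 D" "comp C r p = r1" and q: "q \<in> Hom C D2 D" "comp C r q = r2"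
    using lf assms(3-6) unfolding locally_finite_def by blast
  have "bad_colorings C F A B k t D r \<subseteq> bad_colorings C F A B k t D1 r1"
    using bad_colorings_antimono[OF cat r p(1)] p(2) by simp
  moreover have "bad_colorings C F A B k t D r \<subseteq> bad_colorings C F A B k t D2 r2"
    using bad_colorings_antimono[OF cat r q(1)] q(2) by simp
  ultimately show ?thesis
    using \<open>D \<in> AA\<close> r by blast
qed

lemma ramsey_arrow_compactness:
  assumes cat: "is_category C" and AA: "AA \<subseteq> Ob C" and A: "A \<in> Ob C" and B: "B \<in> AA"
    and "0 < k"
    and fin: "\<And>D. D \<in> AA \<Longrightarrow> finite (Hom C A D)"
    and mono: "\<And>D r. D \<in> AA \<Longrightarrow> r \<in> Hom C D F \<Longrightarrow> is_mono C D F r"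
    and univ: "universal C AA F" and lf: "locally_finite C AA F"
    and arrow: "ramsey_arrow C F B A k t"
  shows "\<exists>X\<in>AA. ramsey_arrow C X B A k t"
proof (rule ccontr)
  assume no_arrow: "\<not> ?thesis"
  let ?I = "SIGMA D:AA. Hom C D F"
  let ?S = "\<lambda>(D, r). bad_colorings C F A B k t D r"
  have "(\<Inter>i\<in>?I. ?S i) \<noteq> {}"
  proof (rule compact_space_Inter_directed_nonempty)
    show "compact_space (product_topology (\<lambda>_. discrete_topology {..<k}) (Hom C A F))"
      by (simp add: compact_space_product_topology compact_space_discrete_topology)
    show "?I \<noteq> {}"
      using univ B unfolding universal_def arr_def by blast
    show "closedin (product_topology (\<lambda>_. discrete_topology {..<k}) (Hom C A F)) (?S i)"
      if "i \<in> ?I" for i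
      using that closedin_bad_colorings[OF cat fin] by auto
    show "?S i \<noteq> {}" if "i \<in> ?I" for i
      using that bad_colorings_nonempty[OF cat \<open>0 < k\<close> A mono] no_arrow by auto
    show "\<exists>l\<in>?I. ?S l \<subseteq> ?S i \<inter> ?S j" if ij: "i \<in> ?I" "j \<in> ?I" for i j
    proof -
      obtain D1 r1 D2 r2 where "i = (D1, r1)" "D1 \<in> AA" "r1 \<in> Hom C D1 F"
        and "j = (D2, r2)" "D2 \<in> AA" "r2 \<in> Hom C D2 F"
        using ij by blast
      then show ?thesis
        using bad_colorings_directed[OF cat lf, of D1 r1 D2 r2 A B k t] by auto
    qed
  qed
  then obtain chi where chi: "\<And>D r. D \<in> AA \<Longrightarrow> r \<in> Hom C D F \<Longrightarrow> chi \<in> bad_colorings C F A B k t D r"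
    by blast
  obtain w0 where "w0 \<in> Hom C B F"
    using univ B unfolding universal_def arr_def by blast
  then have "coloring C A F k chi"
    using chi[OF B] unfolding bad_colorings_def coloring_def by auto
  then obtain w where w: "w \<in> Hom C B F" and few: "card (chi ` (\<lambda>f. comp C w f) ` Hom C A B) \<le> t"
    using arrow unfolding ramsey_arrow_def by blast
  \<comment> \<open>\<open>chi\<close> is bad along \<open>w\<close> itself; the identity of \<open>B\<close> is the copy contradicting \<open>few\<close>\<close>
  have "t < card (chi ` (\<lambda>f. comp C w (comp C (ident C B) f)) ` Hom C A B)"
    using chi[OF B w] category_ident_closed[OF cat] B AA unfolding bad_colorings_def by blast
  then show False
    using few category_comp_ident_left[OF cat] by (simp cong: image_cong)
qed

lemma small_ramsey_degree_le_iff_ramsey_arrow_fin: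
  assumes cat: "is_category C" and "Cfin \<subseteq> Ob C" and "C_conditions C Cfin" and "AA \<subseteq> Cfin"
    and univ: "universal C AA F" and lf: "locally_finite C AA F"
    and A: "A \<in> AA" and "0 < t"
  shows "small_ramsey_degree C AA A \<le> enat t \<longleftrightarrow>
           (\<forall>B\<in>AA. arr C A B \<longrightarrow> ramsey_arrow_fin C F B A t)"
proof -
  have AA: "AA \<subseteq> Ob C"
    using assms(2,4) by blast
  have fin: "finite (Hom C A D)" if "D \<in> AA" for D
    using assms(3,4) A that unfolding C_conditions_def by blast
  have mono: "is_mono C D F r" if "D \<in> AA" "r \<in> Hom C D F" for D r
    using assms(3) AA that category_Hom_Ob[OF cat that(2)] unfolding C_conditions_def by blast
  have "(\<forall>k\<ge>2. \<forall>B\<in>AA. \<exists>X\<in>AA. ramsey_arrow C X B A k t)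
          \<longleftrightarrow> (\<forall>B\<in>AA. arr C A B \<longrightarrow> ramsey_arrow_fin C F B A t)"
    unfolding ramsey_arrow_fin_def
  proof (intro iffI allI ballI impI)
    fix B k assume "\<forall>k\<ge>2. \<forall>B\<in>AA. \<exists>X\<in>AA. ramsey_arrow C X B A k t" "B \<in> AA" "2 \<le> (k::nat)"
    then obtain X where "X \<in> AA" "ramsey_arrow C X B A k t"
      by blast
    then show "ramsey_arrow C F B A k t"
      using ramsey_arrow_arr_trans[OF cat] univ unfolding universal_def by blast
  next
    fix B k assume arrows: "\<forall>B\<in>AA. arr C A B \<longrightarrow> (\<forall>k\<ge>2. ramsey_arrow C F B A k t)"
      and B: "B \<in> AA" and "2 \<le> (k::nat)"
    show "\<exists>X\<in>AA. ramsey_arrow C X B A k t"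
    proof (cases "arr C A B")
      case True
      then show ?thesis
        using ramsey_arrow_compactness[OF cat AA _ B _ fin mono univ lf] arrows A AA B \<open>2 \<le> k\<close>
        by auto
    next
      case False
      then show ?thesis
        using ramsey_arrow_if_not_arr[OF cat] AA B by blast
    qed
  qed
  then show ?thesis
    using small_ramsey_degree_le_enat_iff[OF \<open>0 < t\<close>, of C AA A] by blast
qed

theorem lemma3p4:
  fixes C :: "('o, 'm) category" and Cfin AA :: "'o set" and F :: 'o
  assumes "is_category C"
    and "Cfin \<subseteq> Ob C"
    and "C_conditions C Cfin"
    and "AA \<subseteq> Cfin"
    and "F \<in> Ob C"
    and "universal C AA F"
    and "locally_finite C AA F"
  shows "\<forall>t::nat. \<forall>A\<in>AA. t \<ge> 2 \<longrightarrow>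
           ((small_ramsey_degree C AA A \<le> enat t
               \<longleftrightarrow> (\<forall>B\<in>AA. arr C A B \<longrightarrow> ramsey_arrow_fin C F B A t))
          \<and> ((\<forall>B\<in>AA. arr C A B \<longrightarrow> ramsey_arrow_fin C F B A t)
               \<longleftrightarrow> (\<forall>B\<in>AA. arr C A B \<longrightarrow>
                      (\<exists>lam. coloring C A B t lam \<and> essential C F A B lam))))"
proof (intro allI ballI impI conjI)
  fix t :: nat and A assume A: "A \<in> AA" and "2 \<le> t"
  show "small_ramsey_degree C AA A \<le> enat t
          \<longleftrightarrow> (\<forall>B\<in>AA. arr C A B \<longrightarrow> ramsey_arrow_fin C F B A t)"
    using small_ramsey_degree_le_iff_ramsey_arrow_fin[OF assms(1-4,6,7) A] \<open>2 \<le> t\<close> by simp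
  have "finite (Hom C A B)" if "B \<in> AA" for B
    using assms(3,4) A that unfolding C_conditions_def by blast
  then show "(\<forall>B\<in>AA. arr C A B \<longrightarrow> ramsey_arrow_fin C F B A t)
          \<longleftrightarrow> (\<forall>B\<in>AA. arr C A B \<longrightarrow> (\<exists>lam. coloring C A B t lam \<and> essential C F A B lam))"
    using ramsey_arrow_fin_iff_essential_coloring[OF assms(1)] by blast
qed

end
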